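(* Consider $n$ projects with revenue functions $R_j:\{0,1,2\}\to\mathbb{R}$, $R_j(0)=0$ (i.e., $m=2$). Put $a_j=R_j(1)$, $b_j=R_j(2)-R_j(1)$, and split the projects into $A=\{j: a_j>b_j\}$ and $B=\{j: a_j\le b_j\}$. Let $f(k)$ be the maximum of $\sum_{j\in A}R_j(x_j)$ over $x_j\in\{0,1,2\}$ with $\sum_{j\in A}x_j=k$, and $g(k)$ the maximum of $\sum_{j\in B}R_j(x_j)$ over $x_j\in\{0,1,2\}$ with $\sum_{j\in B}x_j=k$. Index the projects of $B$ as $1,\dots,|B|$ in non-increasing order of $R_i(2)=a_i+b_i$. Then: (1) $f(k)$ equals the sum of the $k$ largest elements of the multiset $\{a_i: i\in A\}\cup\{b_i: i\in A\}$; (2) for $0\le k\le 2|B|$, $g(k)=\sum_{i=1}^{k/2}R_i(2)$ if $k$ is even, and if $k$ is odd, $$g(k)=\max\Bigl(g(k-1)+\max_{\frac{k+3}{2}\le i\le |B|}a_i,\ \ g(k+1)-\min_{1\le i\le \frac{k+1}{2}}b_i\Bigr),$$ where indices refer to projects of $B$ and a maximum over an empty range is $-\infty$.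
   Context: All quantities are as defined in the claim; $k$ ranges over $0\le k\le 2|A|$ for $f$ and $0\le k\le 2|B|$ for $g$. *)

theory Defs
  imports Main "HOL-Library.FuncSet" "HOL-Library.Multiset" "HOL-Library.Extended_Real"
begin

text \<open>Projects are indexed by the natural numbers below n; R j x is the revenue
  of project j when x units are allocated to it (only x in {0,1,2} matters).\<close>

definition alpha :: "(nat \<Rightarrow> nat \<Rightarrow> real) \<Rightarrow> nat \<Rightarrow> real" where
  "alpha R j = R j 1"

definition beta :: "(nat \<Rightarrow> nat \<Rightarrow> real) \<Rightarrow> nat \<Rightarrow> real" where
  "beta R j = R j 2 - R j 1"

definition setA :: "nat \<Rightarrow> (nat \<Rightarrow> nat \<Rightarrow> real) \<Rightarrow> nat set" where
  "setA n R = {j. j < n \<and> alpha R j > beta R j}"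

definition setB :: "nat \<Rightarrow> (nat \<Rightarrow> nat \<Rightarrow> real) \<Rightarrow> nat set" where
  "setB n R = {j. j < n \<and> alpha R j \<le> beta R j}"

definition best :: "(nat \<Rightarrow> nat \<Rightarrow> real) \<Rightarrow> nat set \<Rightarrow> nat \<Rightarrow> real" where
  "best R S k = Max {(\<Sum>j\<in>S. R j (x j)) | x. x \<in> S \<rightarrow>\<^sub>E {0,1,2} \<and> (\<Sum>j\<in>S. x j) = k}"

definition sum_largest :: "nat \<Rightarrow> real multiset \<Rightarrow> real" where
  "sum_largest k M = sum_list (take k (rev (sorted_list_of_multiset M)))"

end

(*
  Giving x_j in {0,1,2} units to project j means collecting the first x_j of its marginal
  revenues a_j = R_j(1) and b_j = R_j(2) - R_j(1). On A, where a_j > b_j, the k largest marginals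
  contain a_j whenever they contain b_j, so they form an allocation and f(k) is their sum.
  On B, where a_j <= b_j, the revenue lies below its chord, R_j(x) <= x R_j(2) / 2, and a
  fractional-knapsack bound shows that an even budget is best spent on the projects with the
  largest R_j(2). An odd optimum gives a single unit to some project p; bounding the others by
  their chords yields the first term of the maximum when p lies outside the top (k+1)/2 projects
  and the second one when it lies inside.
*)
theory Submission
  imports Defs
begin

lemma weighted_sum_le_sum_top:
  fixes w c :: "'a \<Rightarrow> real"
  assumes "finite I" and "T \<subseteq> I" and "\<forall>i\<in>I. 0 \<le> w i \<and> w i \<le> 1"
    and "(\<Sum>i\<in>I. w i) = real (card T)"
    and "\<forall>i\<in>T. \<forall>j\<in>I - T. c j \<le> c i"
  shows "(\<Sum>i\<in>I. w i * c i) \<le> (\<Sum>i\<in>T. c i)"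
proof (cases "T = {}")
  case True
  then have "\<forall>i\<in>I. w i = 0"
    using assms(1,3,4) sum_nonneg_eq_0_iff by (metis card.empty of_nat_0)
  then show ?thesis using True by simp
next
  case False
  have "finite T" using assms(1,2) finite_subset by blast
  define \<theta> where "\<theta> = Min (c ` T)"
  have above: "\<theta> \<le> c i" if "i \<in> T" for i
    using \<open>finite T\<close> that by (simp add: \<theta>_def)
  have "\<theta> \<in> c ` T" using \<open>finite T\<close> False by (simp add: \<theta>_def)
  then have below: "c j \<le> \<theta>" if "j \<in> I - T" for j
    using assms(5) that by force
  \<comment> \<open>Each summand is nonnegative because the threshold \<theta> separates T from I - T.\<close>
  have "0 \<le> (\<Sum>i\<in>I. (of_bool (i \<in> T) - w i) * (c i - \<theta>))"
    using above below assms(3) by (intro sum_nonneg) (auto simp: mult_nonneg_nonpos)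
  also have "\<dots> = (\<Sum>i\<in>I. of_bool (i \<in> T) * c i) - (\<Sum>i\<in>I. w i * c i)
      - \<theta> * ((\<Sum>i\<in>I. of_bool (i \<in> T)) - (\<Sum>i\<in>I. w i))"
    by (simp add: sum_subtractf sum_distrib_left algebra_simps flip: sum.distrib)
  finally show ?thesis using assms(1,2,4) by (simp add: Int_absorb1 Int_absorb2)
qed

lemma sum_le_sum_top:
  fixes c :: "'a \<Rightarrow> real"
  assumes "finite P" "finite T" "card P = card T" "\<forall>i\<in>T. \<forall>j\<in>P - T. c j \<le> c i"
  shows "sum c P \<le> sum c T"
proof -
  have "(\<Sum>i\<in>P \<union> T. of_bool (i \<in> P) * c i) \<le> sum c T"
  proof (rule weighted_sum_le_sum_top)
    show "(\<Sum>i\<in>P \<union> T. of_bool (i \<in> P)) = real (card T)"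
      using assms(1-3) by (simp add: Int_absorb2)
  qed (use assms in auto)
  moreover have "(\<Sum>i\<in>P \<union> T. of_bool (i \<in> P) * c i) = sum c P"
    using assms(1,2) by (simp add: Int_commute)
  ultimately show ?thesis by simp
qed

lemma sum_largest_enumeration:
  fixes v :: "'a \<Rightarrow> real"
  assumes "finite S"
  obtains e where "bij_betw e {..<card S} S"
    and "\<And>q q'. q \<le> q' \<Longrightarrow> q' < card S \<Longrightarrow> v (e q') \<le> v (e q)"
    and "\<And>k. k \<le> card S \<Longrightarrow> sum_largest k (image_mset v (mset_set S)) = (\<Sum>q<k. v (e q))"
proof -
  obtain xs where xs: "set xs = S" "distinct xs" using finite_distinct_list[OF assms] by blast
  define ys where "ys = rev (sort_key v xs)"
  have len: "length ys = card S" using xs distinct_card by (fastforce simp: ys_def)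
  have "sort (map v xs) = map v (sort_key v xs)"
    by (rule properties_for_sort) simp_all
  then have sorted: "rev (sorted_list_of_multiset (image_mset v (mset_set S))) = map v ys"
    unfolding xs(1)[symmetric] using xs(2) by (simp add: ys_def mset_set_set flip: mset_map rev_map)
  show thesis
  proof
    show "bij_betw ((!) ys) {..<card S} S"
      using xs len by (intro bij_betw_nth) (auto simp: ys_def)
    show "v (ys ! q') \<le> v (ys ! q)" if "q \<le> q'" "q' < card S" for q q'
    proof -
      have "sorted (map v (sort_key v xs))" by simp
      then have "map v (sort_key v xs) ! (card S - Suc q') \<le> map v (sort_key v xs) ! (card S - Suc q)"
        using that len by (intro sorted_nth_mono) (auto simp: ys_def)
      then show ?thesis using that len by (simp add: ys_def rev_nth)
    qed
    show "sum_largest k (image_mset v (mset_set S)) = (\<Sum>q<k. v (ys ! q))" if "k \<le> card S" for k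
      using that len by (simp add: sum_largest_def sorted sum_list_sum_nth atLeast0LessThan take_map)
  qed
qed

lemma sum_le_sum_largest:
  fixes v :: "'a \<Rightarrow> real"
  assumes "finite S" "Q \<subseteq> S"
  shows "sum v Q \<le> sum_largest (card Q) (image_mset v (mset_set S))"
proof -
  obtain e where e: "bij_betw e {..<card S} S"
    and mono: "\<And>q q'. q \<le> q' \<Longrightarrow> q' < card S \<Longrightarrow> v (e q') \<le> v (e q)"
    and largest: "\<And>k. k \<le> card S \<Longrightarrow> sum_largest k (image_mset v (mset_set S)) = (\<Sum>q<k. v (e q))"
    using sum_largest_enumeration[OF assms(1)] by blast
  define k where "k = card Q"
  have "k \<le> card S" using assms card_mono k_def by blast
  have inj: "inj_on e {..<k}"
    using inj_on_subset[OF bij_betw_imp_inj_on[OF e], of "{..<k}"] \<open>k \<le> card S\<close> by auto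
  have "sum v Q \<le> sum v (e ` {..<k})"
  proof (rule sum_le_sum_top)
    show "finite Q" using assms finite_subset by blast
    show "card Q = card (e ` {..<k})" using card_image[OF inj] k_def by simp
    show "\<forall>i\<in>e ` {..<k}. \<forall>j\<in>Q - e ` {..<k}. v j \<le> v i"
    proof (intro ballI)
      fix i j assume i: "i \<in> e ` {..<k}" and j: "j \<in> Q - e ` {..<k}"
      obtain q where "q < k" "i = e q" using i by auto
      moreover obtain q' where "q' < card S" "j = e q'"
        using j assms(2) bij_betw_imp_surj_on[OF e] by force
      moreover have "k \<le> q'" using j \<open>j = e q'\<close> by (metis DiffE image_eqI lessThan_iff not_le)
      ultimately show "v j \<le> v i" using mono by simp
    qed
  qed simp
  also have "\<dots> = sum_largest k (image_mset v (mset_set S))"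
    using largest[OF \<open>k \<le> card S\<close>] sum.reindex[OF inj, of v] by simp
  finally show ?thesis unfolding k_def .
qed

lemma sum_largest_attained:
  fixes v :: "'a \<Rightarrow> real"
  assumes "finite S" "k \<le> card S"
  obtains Q where "Q \<subseteq> S" "card Q = k" "sum v Q = sum_largest k (image_mset v (mset_set S))"
    and "\<And>p p'. p \<in> Q \<Longrightarrow> p' \<in> S \<Longrightarrow> v p < v p' \<Longrightarrow> p' \<in> Q"
proof -
  obtain e where e: "bij_betw e {..<card S} S"
    and mono: "\<And>q q'. q \<le> q' \<Longrightarrow> q' < card S \<Longrightarrow> v (e q') \<le> v (e q)"
    and largest: "sum_largest k (image_mset v (mset_set S)) = (\<Sum>q<k. v (e q))"
    using sum_largest_enumeration[OF assms(1)] assms(2) by metis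
  have inj: "inj_on e {..<k}"
    using inj_on_subset[OF bij_betw_imp_inj_on[OF e], of "{..<k}"] assms(2) by auto
  show thesis
  proof
    show "e ` {..<k} \<subseteq> S" using bij_betw_imp_surj_on[OF e] assms(2) by auto
    show "card (e ` {..<k}) = k" using card_image[OF inj] by simp
    show "sum v (e ` {..<k}) = sum_largest k (image_mset v (mset_set S))"
      using largest sum.reindex[OF inj, of v] by simp
    show "p' \<in> e ` {..<k}" if p: "p \<in> e ` {..<k}" and p': "p' \<in> S" and less: "v p < v p'" for p p'
    proof -
      obtain q where "q < k" "p = e q" using p by auto
      moreover obtain q' where "q' < card S" "p' = e q'"
        using p' bij_betw_imp_surj_on[OF e] by force
      ultimately have "q' < k" using mono[of q q'] less by fastforce
      then show ?thesis using \<open>p' = e q'\<close> by simp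
    qed
  qed
qed

lemma finite_best_candidates:
  assumes "finite S"
  shows "finite {(\<Sum>j\<in>S. R j (x j)) | x. x \<in> S \<rightarrow>\<^sub>E {0,1,2::nat} \<and> (\<Sum>j\<in>S. x j) = k}"
proof -
  have "{(\<Sum>j\<in>S. R j (x j)) | x. x \<in> S \<rightarrow>\<^sub>E {0,1,2::nat} \<and> (\<Sum>j\<in>S. x j) = k}
     = (\<lambda>x. \<Sum>j\<in>S. R j (x j)) ` {x \<in> S \<rightarrow>\<^sub>E {0,1,2}. (\<Sum>j\<in>S. x j) = k}" by auto
  then show ?thesis using assms by (simp add: finite_PiE)
qed

lemma best_ge:
  assumes "finite S" "x \<in> S \<rightarrow>\<^sub>E {0,1,2}" "(\<Sum>j\<in>S. x j) = k"
  shows "(\<Sum>j\<in>S. R j (x j)) \<le> best R S k"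
  unfolding best_def by (rule Max_ge[OF finite_best_candidates[OF assms(1)]]) (use assms in auto)

lemma allocation_of_pairs_and_singles:
  fixes r :: "'a \<Rightarrow> nat \<Rightarrow> real"
  assumes "finite I" "T \<subseteq> I" "P \<subseteq> I" "T \<inter> P = {}"
  obtains x where "x \<in> I \<rightarrow>\<^sub>E {0,1,2}" "(\<Sum>i\<in>I. x i) = 2 * card T + card P"
    "(\<Sum>i\<in>I. r i (x i)) = (\<Sum>i\<in>T. r i 2) + (\<Sum>i\<in>P. r i 1) + (\<Sum>i\<in>I - (T \<union> P). r i 0)"
proof
  define x where "x = restrict (\<lambda>i. if i \<in> T then 2 else if i \<in> P then 1 else 0::nat) I"
  show "x \<in> I \<rightarrow>\<^sub>E {0,1,2}" by (simp add: x_def)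
  have "(\<Sum>i\<in>I. x i) = (\<Sum>i\<in>I. 2 * of_bool (i \<in> T) + of_bool (i \<in> P))"
    using assms(4) by (intro sum.cong) (auto simp: x_def)
  also have "\<dots> = 2 * card T + card P"
    using assms(1-3) by (simp add: sum.distrib sum_distrib_left[symmetric] Int_absorb1)
  finally show "(\<Sum>i\<in>I. x i) = 2 * card T + card P" .
  have "(\<Sum>i\<in>I. r i (x i)) = (\<Sum>i\<in>I. of_bool (i \<in> T) * r i 2 + of_bool (i \<in> P) * r i 1
      + of_bool (i \<notin> T \<and> i \<notin> P) * r i 0)"
    using assms(4) by (intro sum.cong) (auto simp: x_def)
  also have "\<dots> = (\<Sum>i\<in>T. r i 2) + (\<Sum>i\<in>P. r i 1) + (\<Sum>i\<in>I - (T \<union> P). r i 0)"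
  proof -
    have "I \<inter> {i. i \<notin> T \<and> i \<notin> P} = I - (T \<union> P)" by blast
    then show ?thesis using assms(1-3) by (simp add: sum.distrib Int_absorb1)
  qed
  finally show "(\<Sum>i\<in>I. r i (x i)) = (\<Sum>i\<in>T. r i 2) + (\<Sum>i\<in>P. r i 1) + (\<Sum>i\<in>I - (T \<union> P). r i 0)" .
qed

lemma best_ge_pairs_and_singles:
  fixes r :: "nat \<Rightarrow> nat \<Rightarrow> real"
  assumes "finite I" "T \<subseteq> I" "P \<subseteq> I" "T \<inter> P = {}" "\<forall>i\<in>I. r i 0 = 0"
  shows "(\<Sum>i\<in>T. r i 2) + (\<Sum>i\<in>P. r i 1) \<le> best r I (2 * card T + card P)"
proof -
  obtain x where "x \<in> I \<rightarrow>\<^sub>E {0,1,2}" "(\<Sum>i\<in>I. x i) = 2 * card T + card P"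
    "(\<Sum>i\<in>I. r i (x i)) = (\<Sum>i\<in>T. r i 2) + (\<Sum>i\<in>P. r i 1) + (\<Sum>i\<in>I - (T \<union> P). r i 0)"
    using allocation_of_pairs_and_singles[OF assms(1-4)] by blast
  then show ?thesis using best_ge[of I x, where R = r] assms(1,5) by simp
qed

lemma best_attained:
  assumes "finite S" "k \<le> 2 * card S"
  obtains x where "x \<in> S \<rightarrow>\<^sub>E {0,1,2}" "(\<Sum>j\<in>S. x j) = k" "best R S k = (\<Sum>j\<in>S. R j (x j))"
proof -
  have "k div 2 \<le> card S" using assms(2) by simp
  then obtain T where T: "T \<subseteq> S" "card T = k div 2"
    using obtain_subset_with_card_n by metis
  have "k mod 2 \<le> card S - k div 2" using assms(2) by presburger
  then have "k mod 2 \<le> card (S - T)" using T assms(1) by (simp add: card_Diff_subset finite_subset)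
  then obtain P where P: "P \<subseteq> S - T" "card P = k mod 2"
    using obtain_subset_with_card_n by metis
  obtain x\<^sub>0 where "x\<^sub>0 \<in> S \<rightarrow>\<^sub>E {0,1,2}" "(\<Sum>j\<in>S. x\<^sub>0 j) = k"
    using allocation_of_pairs_and_singles[OF assms(1) T(1), of P, where r = R] P T(2) by auto
  then have "best R S k \<in> {(\<Sum>j\<in>S. R j (x j)) | x. x \<in> S \<rightarrow>\<^sub>E {0,1,2::nat} \<and> (\<Sum>j\<in>S. x j) = k}"
    unfolding best_def by (intro Max_in finite_best_candidates assms(1)) auto
  then show ?thesis using that by auto
qed

lemma best_reindex:
  assumes h: "bij_betw h I S"
  shows "best (\<lambda>i. R (h i)) I k = best R S k"
proof -
  have sum_h: "(\<Sum>i\<in>I. f (h i)) = sum f S" for f :: "nat \<Rightarrow> 'b::comm_monoid_add"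
    using sum.reindex_bij_betw[OF h] .
  have h': "bij_betw (inv_into I h) S I" using bij_betw_inv_into[OF h] .
  let ?V\<^sub>I = "{(\<Sum>i\<in>I. R (h i) (y i)) | y. y \<in> I \<rightarrow>\<^sub>E {0,1,2::nat} \<and> (\<Sum>i\<in>I. y i) = k}"
  let ?V\<^sub>S = "{(\<Sum>j\<in>S. R j (x j)) | x. x \<in> S \<rightarrow>\<^sub>E {0,1,2::nat} \<and> (\<Sum>j\<in>S. x j) = k}"
  have "?V\<^sub>I = ?V\<^sub>S"
  proof (intro equalityI subsetI)
    fix r assume "r \<in> ?V\<^sub>I"
    then obtain y where y: "y \<in> I \<rightarrow>\<^sub>E {0,1,2}" "(\<Sum>i\<in>I. y i) = k" "r = (\<Sum>i\<in>I. R (h i) (y i))"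
      by blast
    define x where "x = restrict (\<lambda>j. y (inv_into I h j)) S"
    have xh: "x (h i) = y i" if "i \<in> I" for i
      using that h by (auto simp: x_def bij_betw_def)
    have "x \<in> S \<rightarrow>\<^sub>E {0,1,2}" using PiE_mem[OF y(1)] bij_betwE[OF h'] by (auto simp: x_def restrict_PiE_iff)
    moreover have "(\<Sum>j\<in>S. x j) = k" using y(2) xh by (simp flip: sum_h)
    moreover have "r = (\<Sum>j\<in>S. R j (x j))" using y(3) xh by (simp flip: sum_h)
    ultimately show "r \<in> ?V\<^sub>S" by blast
  next
    fix r assume "r \<in> ?V\<^sub>S"
    then obtain x where x: "x \<in> S \<rightarrow>\<^sub>E {0,1,2}" "(\<Sum>j\<in>S. x j) = k" "r = (\<Sum>j\<in>S. R j (x j))"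
      by blast
    define y where "y = restrict (\<lambda>i. x (h i)) I"
    have "y \<in> I \<rightarrow>\<^sub>E {0,1,2}" using PiE_mem[OF x(1)] bij_betwE[OF h] by (auto simp: y_def restrict_PiE_iff)
    moreover have "(\<Sum>i\<in>I. y i) = k" using x(2) by (simp add: y_def flip: sum_h)
    moreover have "r = (\<Sum>i\<in>I. R (h i) (y i))" using x(3) by (simp add: y_def flip: sum_h)
    ultimately show "r \<in> ?V\<^sub>I" by blast
  qed
  then show ?thesis by (simp add: best_def)
qed

text \<open>Value of the l-th unit (l = 1, 2) given to project j. An allocation x is identified with
  the set SIGMA j:S. {1..x j} of units it uses.\<close>
fun marginal :: "(nat \<Rightarrow> nat \<Rightarrow> real) \<Rightarrow> nat \<times> nat \<Rightarrow> real" where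
  "marginal R (j, l) = (if l = 1 then alpha R j else beta R j)"

lemma revenue_eq_sum_marginal:
  assumes "finite S" "x \<in> S \<rightarrow>\<^sub>E {0,1,2}" "\<forall>j\<in>S. R j 0 = 0"
  shows "(\<Sum>j\<in>S. R j (x j)) = sum (marginal R) (SIGMA j:S. {1..x j})"
proof -
  have "R j (x j) = (\<Sum>l\<in>{1..x j}. marginal R (j, l))" if "j \<in> S" for j
    using PiE_mem[OF assms(2) that] assms(3) that
    by (auto simp: alpha_def beta_def numeral_2_eq_2 atLeastAtMostSuc_conv)
  then have "(\<Sum>j\<in>S. R j (x j)) = (\<Sum>j\<in>S. \<Sum>l\<in>{1..x j}. marginal R (j, l))" by simp
  also have "\<dots> = sum (marginal R) (SIGMA j:S. {1..x j})"
    using sum.Sigma[OF assms(1), of "\<lambda>j. {1..x j}" "\<lambda>j l. marginal R (j, l)"] by (simp del: marginal.simps)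
  finally show ?thesis .
qed

lemma image_mset_marginal:
  assumes "finite A"
  shows "image_mset (marginal R) (mset_set (A \<times> {1,2}))
       = image_mset (alpha R) (mset_set A) + image_mset (beta R) (mset_set A)"
proof -
  have "A \<times> {1,2} = (\<lambda>j. (j, 1::nat)) ` A \<union> (\<lambda>j. (j, 2)) ` A" by auto
  also have "mset_set \<dots> = image_mset (\<lambda>j. (j, 1)) (mset_set A) + image_mset (\<lambda>j. (j, 2)) (mset_set A)"
    using assms by (subst mset_set_Union) (auto simp: image_mset_mset_set inj_on_def)
  finally have "mset_set (A \<times> {1,2}) = \<dots>" .
  then show ?thesis by (simp add: multiset.map_comp comp_def)
qed

lemma allocation_of_unit_set:
  assumes "Q \<subseteq> A \<times> {1,2}" and first_unit: "\<And>j. (j, 2) \<in> Q \<Longrightarrow> (j, 1) \<in> Q"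
  obtains x where "x \<in> A \<rightarrow>\<^sub>E {0,1,2::nat}" "(SIGMA j:A. {1..x j}) = Q"
proof
  define x where "x = restrict (\<lambda>j. if (j, 2) \<in> Q then 2 else if (j, 1) \<in> Q then 1 else 0::nat) A"
  show "x \<in> A \<rightarrow>\<^sub>E {0,1,2}" by (simp add: x_def)
  show "(SIGMA j:A. {1..x j}) = Q"
  proof (intro set_eqI iffI)
    fix p assume "p \<in> (SIGMA j:A. {1..x j})"
    then obtain j l where jl: "p = (j, l)" "j \<in> A" "1 \<le> l" "l \<le> x j" by auto
    moreover have "x j \<le> 2" using jl(2) by (simp add: x_def)
    ultimately have "l = 1 \<or> l = 2" by linarith
    then show "p \<in> Q" using jl first_unit by (auto simp: x_def split: if_splits)
  next
    fix p assume "p \<in> Q"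
    then obtain j l where "p = (j, l)" "j \<in> A" "l \<in> {1,2}" using assms(1) by auto
    then show "p \<in> (SIGMA j:A. {1..x j})" using \<open>p \<in> Q\<close> by (auto simp: x_def)
  qed
qed

theorem best_concave:
  assumes fin: "finite A" and R0: "\<forall>j\<in>A. R j 0 = 0" and concave: "\<forall>j\<in>A. beta R j < alpha R j"
    and k: "k \<le> 2 * card A"
  shows "best R A k = sum_largest k (image_mset (alpha R) (mset_set A) + image_mset (beta R) (mset_set A))"
proof -
  have card_units: "card (A \<times> {1,2::nat}) = 2 * card A" using fin by (simp add: card_cartesian_product)
  obtain Q where Q: "Q \<subseteq> A \<times> {1,2}" "card Q = k"
    and sum_Q: "sum (marginal R) Q = sum_largest k (image_mset (marginal R) (mset_set (A \<times> {1,2})))"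
    and closed: "\<And>p p'. p \<in> Q \<Longrightarrow> p' \<in> A \<times> {1,2} \<Longrightarrow> marginal R p < marginal R p' \<Longrightarrow> p' \<in> Q"
    using sum_largest_attained[of "A \<times> {1,2}" k "marginal R"] fin k card_units by auto
  \<comment> \<open>Concavity makes the first unit of a project more valuable than the second, so Q is an allocation.\<close>
  have first_unit: "(j, 1) \<in> Q" if "(j, 2) \<in> Q" for j
    using closed[OF that, of "(j, 1)"] that Q(1) concave by auto
  obtain x where x: "x \<in> A \<rightarrow>\<^sub>E {0,1,2}" and units_x: "(SIGMA j:A. {1..x j}) = Q"
    using allocation_of_unit_set[OF Q(1) first_unit] by blast
  have "(\<Sum>j\<in>A. x j) = card (SIGMA j:A. {1..x j})" using fin by simp
  then have sum_x: "(\<Sum>j\<in>A. x j) = k" using units_x Q(2) by simp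
  obtain y where y: "y \<in> A \<rightarrow>\<^sub>E {0,1,2}" "(\<Sum>j\<in>A. y j) = k" "best R A k = (\<Sum>j\<in>A. R j (y j))"
    using best_attained[OF fin k] by blast
  have "best R A k = sum (marginal R) (SIGMA j:A. {1..y j})"
    using y(3) revenue_eq_sum_marginal[where R = R, OF fin y(1) R0] by simp
  also have "\<dots> \<le> sum_largest k (image_mset (marginal R) (mset_set (A \<times> {1,2})))"
  proof -
    have units_y: "(SIGMA j:A. {1..y j}) \<subseteq> A \<times> {1,2}" using PiE_mem[OF y(1)] by fastforce
    have "card (SIGMA j:A. {1..y j}) = k" using fin y(2) by simp
    then show ?thesis using sum_le_sum_largest[OF _ units_y, of "marginal R"] fin by simp
  qed
  finally have "best R A k \<le> sum_largest k (image_mset (marginal R) (mset_set (A \<times> {1,2})))" .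
  moreover have "sum_largest k (image_mset (marginal R) (mset_set (A \<times> {1,2}))) \<le> best R A k"
    using best_ge[OF fin x sum_x, of R] revenue_eq_sum_marginal[where R = R, OF fin x R0] units_x sum_Q by simp
  ultimately show ?thesis using image_mset_marginal[OF fin] by simp
qed

lemma revenue_le_chord:
  assumes "R j 0 = 0" "alpha R j \<le> beta R j" "y \<le> 2"
  shows "R j y \<le> real y / 2 * R j 2"
  using assms by (auto simp: alpha_def beta_def le_Suc_eq numeral_2_eq_2)

lemma weighted_sum_le_prefix:
  fixes w c :: "nat \<Rightarrow> real"
  assumes "antimono_on {1..N} c" "\<forall>i\<in>{1..N}. 0 \<le> w i \<and> w i \<le> 1"
    and "(\<Sum>i=1..N. w i) = real K" "K \<le> N"
  shows "(\<Sum>i=1..N. w i * c i) \<le> (\<Sum>i=1..K. c i)"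
  using assms by (intro weighted_sum_le_sum_top) (auto simp: monotone_on_def)

lemma revenue_le_prefix:
  assumes R0: "\<forall>i\<in>{1..N}. r i 0 = 0" and convex: "\<forall>i\<in>{1..N}. alpha r i \<le> beta r i"
    and sorted: "antimono_on {1..N} (\<lambda>i. r i 2)"
    and y: "y \<in> {1..N} \<rightarrow>\<^sub>E {0,1,2}" "(\<Sum>i=1..N. y i) = 2 * m" and "m \<le> N"
  shows "(\<Sum>i=1..N. r i (y i)) \<le> (\<Sum>i=1..m. r i 2)"
proof -
  have y_le: "y i \<le> 2" if "i \<in> {1..N}" for i using PiE_mem[OF y(1) that] by auto
  have "(\<Sum>i=1..N. r i (y i)) \<le> (\<Sum>i=1..N. real (y i) / 2 * r i 2)"
    using y_le R0 convex by (intro sum_mono revenue_le_chord) auto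
  also have "\<dots> \<le> (\<Sum>i=1..m. r i 2)"
  proof (rule weighted_sum_le_prefix[OF sorted _ _ \<open>m \<le> N\<close>])
    show "\<forall>i\<in>{1..N}. 0 \<le> real (y i) / 2 \<and> real (y i) / 2 \<le> 1" using y_le by fastforce
    show "(\<Sum>i=1..N. real (y i) / 2) = real m"
      using y(2) by (simp flip: sum_divide_distrib of_nat_sum)
  qed
  finally show ?thesis .
qed

theorem best_convex_even:
  assumes R0: "\<forall>i\<in>{1..N}. r i 0 = 0" and convex: "\<forall>i\<in>{1..N}. alpha r i \<le> beta r i"
    and sorted: "antimono_on {1..N} (\<lambda>i. r i 2)" and "m \<le> N"
  shows "best r {1..N} (2 * m) = (\<Sum>i=1..m. r i 2)"
proof -
  have "(\<Sum>i=1..m. r i 2) \<le> best r {1..N} (2 * m)"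
    using best_ge_pairs_and_singles[of "{1..N}" "{1..m}" "{}" r] R0 \<open>m \<le> N\<close> by simp
  moreover obtain y where y: "y \<in> {1..N} \<rightarrow>\<^sub>E {0,1,2}" "(\<Sum>i=1..N. y i) = 2 * m"
    "best r {1..N} (2 * m) = (\<Sum>i=1..N. r i (y i))"
    using best_attained[of "{1..N}" "2 * m"] \<open>m \<le> N\<close> by auto
  ultimately show ?thesis
    using revenue_le_prefix[OF R0 convex sorted y(1,2) \<open>m \<le> N\<close>] by simp
qed

text \<open>Here p is a project receiving a single unit; t = 0 and t = 1 give the bounds for p outside
  and inside the prefix of projects receiving two units.\<close>
lemma revenue_le_prefix_with_single:
  assumes R0: "\<forall>i\<in>{1..N}. r i 0 = 0" and convex: "\<forall>i\<in>{1..N}. alpha r i \<le> beta r i"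
    and sorted: "antimono_on {1..N} (\<lambda>i. r i 2)"
    and y: "y \<in> {1..N} \<rightarrow>\<^sub>E {0,1,2}" "(\<Sum>i=1..N. y i) = 2 * m + 1"
    and p: "p \<in> {1..N}" "y p = 1" and t: "t \<le> 1" "m + t \<le> N"
  shows "(\<Sum>i=1..N. r i (y i)) \<le> alpha r p - real t * r p 2 + (\<Sum>i=1..m+t. r i 2)"
proof -
  have y_le: "y i \<le> 2" if "i \<in> {1..N}" for i using PiE_mem[OF y(1) that] by auto
  define w where "w = (\<lambda>i. real (y i) / 2)(p := real t)"
  have sum_w: "(\<Sum>i=1..N. w i * c i) = real t * c p + (\<Sum>i\<in>{1..N} - {p}. real (y i) / 2 * c i)"
    for c :: "nat \<Rightarrow> real"
    using sum.remove[OF _ p(1), of "\<lambda>i. w i * c i"] by (simp add: w_def)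
  have "(\<Sum>i=1..N. r i (y i)) = alpha r p + (\<Sum>i\<in>{1..N} - {p}. r i (y i))"
    using sum.remove[OF _ p(1), of "\<lambda>i. r i (y i)"] p(2) by (simp add: alpha_def)
  also have "(\<Sum>i\<in>{1..N} - {p}. r i (y i)) \<le> (\<Sum>i\<in>{1..N} - {p}. real (y i) / 2 * r i 2)"
    using y_le R0 convex by (intro sum_mono revenue_le_chord) auto
  also have "\<dots> = (\<Sum>i=1..N. w i * r i 2) - real t * r p 2"
    using sum_w[of "\<lambda>i. r i 2"] by simp
  also have "(\<Sum>i=1..N. w i * r i 2) \<le> (\<Sum>i=1..m+t. r i 2)"
  proof (rule weighted_sum_le_prefix[OF sorted _ _ t(2)])
    show "\<forall>i\<in>{1..N}. 0 \<le> w i \<and> w i \<le> 1" using y_le t(1) by (fastforce simp: w_def)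
    have "(\<Sum>i=1..N. real (y i)) = real (y p) + (\<Sum>i\<in>{1..N} - {p}. real (y i))"
      using sum.remove[OF _ p(1)] by blast
    then show "(\<Sum>i=1..N. w i) = real (m + t)"
      using sum_w[of "\<lambda>_. 1"] y(2) p(2) by (simp add: sum_divide_distrib[symmetric] flip: of_nat_sum)
  qed
  finally show ?thesis by simp
qed

theorem best_convex_odd:
  assumes R0: "\<forall>i\<in>{1..N}. r i 0 = 0" and convex: "\<forall>i\<in>{1..N}. alpha r i \<le> beta r i"
    and sorted: "antimono_on {1..N} (\<lambda>i. r i 2)" and m: "m + 1 \<le> N"
  shows "ereal (best r {1..N} (2 * m + 1))
    = max (ereal (\<Sum>i=1..m. r i 2) + (SUP i\<in>{m+2..N}. ereal (alpha r i)))
          (ereal ((\<Sum>i=1..m+1. r i 2) - Min (beta r ` {1..m+1})))"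
    (is "_ = max (_ + ?sup) (ereal (_ - ?min))")
proof (rule antisym)
  have single_outside: "(\<Sum>i=1..m. r i 2) + alpha r i \<le> best r {1..N} (2 * m + 1)"
    if "i \<in> {m+2..N}" for i
  proof -
    have "(\<Sum>i\<in>{1..m}. r i 2) + (\<Sum>i\<in>{i}. r i 1) \<le> best r {1..N} (2 * card {1..m} + card {i})"
      by (rule best_ge_pairs_and_singles) (use R0 that in auto)
    then show ?thesis by (simp add: alpha_def)
  qed
  have single_inside: "(\<Sum>i=1..m+1. r i 2) - beta r i \<le> best r {1..N} (2 * m + 1)"
    if "i \<in> {1..m+1}" for i
  proof -
    have "(\<Sum>i\<in>{1..m+1} - {i}. r i 2) + (\<Sum>i\<in>{i}. r i 1)
        \<le> best r {1..N} (2 * card ({1..m+1} - {i}) + card {i})"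
      by (rule best_ge_pairs_and_singles) (use R0 that m in auto)
    then show ?thesis using that by (simp add: beta_def sum_diff1)
  qed
  show "max (ereal (\<Sum>i=1..m. r i 2) + ?sup) (ereal ((\<Sum>i=1..m+1. r i 2) - ?min))
      \<le> ereal (best r {1..N} (2 * m + 1))"
  proof (rule max.boundedI)
    have "?sup \<le> ereal (best r {1..N} (2 * m + 1) - (\<Sum>i=1..m. r i 2))"
      using single_outside by (intro SUP_least) (simp add: algebra_simps)
    then show "ereal (\<Sum>i=1..m. r i 2) + ?sup \<le> ereal (best r {1..N} (2 * m + 1))"
      by (metis add_left_mono diff_add_cancel plus_ereal.simps(1) add.commute)
    have "?min \<in> beta r ` {1..m+1}" by (intro Min_in) auto
    then obtain i where "i \<in> {1..m+1}" "?min = beta r i" by blast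
    then show "ereal ((\<Sum>i=1..m+1. r i 2) - ?min) \<le> ereal (best r {1..N} (2 * m + 1))"
      using single_inside by simp
  qed
  obtain y where y: "y \<in> {1..N} \<rightarrow>\<^sub>E {0,1,2}" "(\<Sum>i=1..N. y i) = 2 * m + 1"
    and best_y: "best r {1..N} (2 * m + 1) = (\<Sum>i=1..N. r i (y i))"
    using best_attained[of "{1..N}" "2 * m + 1"] m by auto
  have "\<exists>p\<in>{1..N}. y p = 1"
  proof (rule ccontr)
    assume "\<not> (\<exists>p\<in>{1..N}. y p = 1)"
    then have "even (y i)" if "i \<in> {1..N}" for i using PiE_mem[OF y(1) that] that by auto
    then have "even (\<Sum>i=1..N. y i)" by (intro dvd_sum) blast
    with y(2) show False by simp
  qed
  then obtain p where p: "p \<in> {1..N}" "y p = 1" by blast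
  note bound = revenue_le_prefix_with_single[OF R0 convex sorted y p]
  show "ereal (best r {1..N} (2 * m + 1))
      \<le> max (ereal (\<Sum>i=1..m. r i 2) + ?sup) (ereal ((\<Sum>i=1..m+1. r i 2) - ?min))"
  proof (cases "m + 2 \<le> p")
    case True
    have "ereal (best r {1..N} (2 * m + 1)) \<le> ereal (\<Sum>i=1..m. r i 2) + ereal (alpha r p)"
      using bound[of 0] m best_y by simp
    also have "\<dots> \<le> ereal (\<Sum>i=1..m. r i 2) + ?sup"
      using True p(1) by (intro add_left_mono SUP_upper) auto
    finally show ?thesis by (rule max.coboundedI1)
  next
    case False
    have "?min \<le> beta r p" using False p(1) by (intro Min_le) auto
    then have "best r {1..N} (2 * m + 1) \<le> (\<Sum>i=1..m+1. r i 2) - ?min"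
      using bound[of 1] m best_y by (simp add: alpha_def beta_def)
    then show ?thesis by (intro max.coboundedI2) simp
  qed
qed

theorem best_convex_sorted:
  assumes \<sigma>: "bij_betw \<sigma> {1..N} B" and R0: "\<forall>j\<in>B. R j 0 = 0"
    and convex: "\<forall>j\<in>B. alpha R j \<le> beta R j"
    and sorted: "\<forall>i j. 1 \<le> i \<and> i \<le> j \<and> j \<le> N \<longrightarrow> R (\<sigma> j) 2 \<le> R (\<sigma> i) 2"
    and k: "k \<le> 2 * N"
  shows "(even k \<longrightarrow> best R B k = (\<Sum>i=1..k div 2. R (\<sigma> i) 2))
       \<and> (odd k \<longrightarrow> ereal (best R B k)
            = max (ereal (best R B (k - 1)) + (SUP i\<in>{(k + 3) div 2..N}. ereal (alpha R (\<sigma> i))))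
                  (ereal (best R B (k + 1) - Min ((\<lambda>i. beta R (\<sigma> i)) ` {1..(k + 1) div 2}))))"
    (is "(_ \<longrightarrow> ?even) \<and> (_ \<longrightarrow> ?odd)")
proof -
  define r where "r = (\<lambda>i. R (\<sigma> i))"
  have best_r: "best R B k' = best r {1..N} k'" for k'
    unfolding r_def by (rule best_reindex[OF \<sigma>, symmetric])
  have R0_r: "\<forall>i\<in>{1..N}. r i 0 = 0" using R0 bij_betwE[OF \<sigma>] by (simp add: r_def)
  have convex_r: "\<forall>i\<in>{1..N}. alpha r i \<le> beta r i"
    using convex bij_betwE[OF \<sigma>] by (simp add: r_def alpha_def beta_def)
  have sorted_r: "antimono_on {1..N} (\<lambda>i. r i 2)"
    using sorted by (auto simp: monotone_on_def r_def)
  note even_case = best_convex_even[OF R0_r convex_r sorted_r]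
  show ?thesis
  proof (intro conjI impI)
    assume "even k"
    then show ?even using even_case[of "k div 2"] k by (simp add: best_r r_def)
  next
    assume "odd k"
    then obtain m where m: "k = 2 * m + 1" using oddE by blast
    then have "m + 1 \<le> N" using k by simp
    moreover have "alpha r = (\<lambda>i. alpha R (\<sigma> i))" "beta r = (\<lambda>i. beta R (\<sigma> i))"
      by (auto simp: r_def alpha_def beta_def)
    ultimately show ?odd
      using best_convex_odd[OF R0_r convex_r sorted_r] even_case[of m] even_case[of "m + 1"] m
      by (simp add: best_r r_def)
  qed
qed

theorem lemma7:
  fixes n :: nat and R :: "nat \<Rightarrow> nat \<Rightarrow> real"
  assumes R0: "\<forall>j<n. R j 0 = 0"
  shows "(\<forall>k \<le> 2 * card (setA n R).
            best R (setA n R) k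
              = sum_largest k (image_mset (alpha R) (mset_set (setA n R))
                               + image_mset (beta R) (mset_set (setA n R))))
       \<and> (\<forall>\<sigma> :: nat \<Rightarrow> nat.
            bij_betw \<sigma> {1..card (setB n R)} (setB n R)
            \<and> (\<forall>i j. 1 \<le> i \<and> i \<le> j \<and> j \<le> card (setB n R) \<longrightarrow> R (\<sigma> j) 2 \<le> R (\<sigma> i) 2)
            \<longrightarrow> (\<forall>k \<le> 2 * card (setB n R).
                  (even k \<longrightarrow> best R (setB n R) k = (\<Sum>i=1..k div 2. R (\<sigma> i) 2))
                \<and> (odd k \<longrightarrow> ereal (best R (setB n R) k)
                     = max (ereal (best R (setB n R) (k - 1))
                              + (SUP i\<in>{(k + 3) div 2..card (setB n R)}. ereal (alpha R (\<sigma> i))))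
                           (ereal (best R (setB n R) (k + 1)
                              - Min ((\<lambda>i. beta R (\<sigma> i)) ` {1..(k + 1) div 2}))))))"
proof -
  have finite_A: "finite (setA n R)" by (rule finite_subset[of _ "{..<n}"]) (auto simp: setA_def)
  have R0_A: "\<forall>j\<in>setA n R. R j 0 = 0" and R0_B: "\<forall>j\<in>setB n R. R j 0 = 0"
    using R0 by (auto simp: setA_def setB_def)
  have concave: "\<forall>j\<in>setA n R. beta R j < alpha R j" and convex: "\<forall>j\<in>setB n R. alpha R j \<le> beta R j"
    by (auto simp: setA_def setB_def)
  show ?thesis
  proof ((rule conjI; intro allI impI), goal_cases)
    case (1 k)
    then show ?case by (rule best_concave[OF finite_A R0_A concave])
  next
    case (2 \<sigma> k)
    then show ?case
      using best_convex_sorted[where \<sigma> = \<sigma> and N = "card (setB n R)" and k = k, OF _ R0_B convex]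
      by blast
  qed
qed

end
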